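(* Let $d\ge2$ and $O_+=\sum_{\vec a\in\mathbb{Z}_d^3}\big[1+(-d)^{wt(\vec a)-1}\big]|\vec a\rangle\langle\vec a|$ on $(\mathbb{C}^d)^{\otimes3}$. For every density operator $\rho$ on $\mathbb{C}^d$, $$\mathrm{Tr}[\Phi^3(O_+^2)\rho^{\otimes3}]=\frac{1}{d+2}\Big\{(d-1)(d^2+3d+4)+3d(d-1)(d+1)\mathrm{Tr}[\rho^2]+2(d^3-d^2+6)\mathrm{Tr}[\rho^3]\Big\}.$$
   Context: $wt(\vec a)$ is the largest number of equal entries of $\vec a=(a_1,a_2,a_3)$ (1 if pairwise distinct, 2 if exactly two coincide, 3 if all coincide). $\Phi^3(X)=\int dU\,U^{\otimes3}XU^{\dagger\otimes3}$ with $U$ drawn from the Haar measure on $U(d)$ or from any unitary 3-design. *)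

theory Defs
  imports "HOL-Probability.Probability"
begin

text \<open>Operators on C^d are complex d x d matrices indexed by a finite type 'n with CARD('n) = d.
  Operators on the threefold tensor product (C^d)^{\<otimes>3} are matrices indexed by 'n \<times> 'n \<times> 'n;
  the computational basis vector |a1 a2 a3> corresponds to the index (a1, a2, a3).\<close>

definition cadj :: "complex^'m^'m \<Rightarrow> complex^'m^'m" where
  "cadj A = (\<chi> i j. cnj (A $ j $ i))"

definition unitary_mat :: "complex^'n^'n \<Rightarrow> bool" where
  "unitary_mat U \<longleftrightarrow> cadj U ** U = mat 1"

definition tensor3 :: "complex^'n^'n \<Rightarrow> complex^('n \<times> 'n \<times> 'n)^('n \<times> 'n \<times> 'n)" where
  "tensor3 A = (\<chi> i j. A $ fst i $ fst j * A $ fst (snd i) $ fst (snd j)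
                         * A $ snd (snd i) $ snd (snd j))"

definition density_op :: "complex^'n^'n \<Rightarrow> bool" where
  "density_op \<rho> \<longleftrightarrow> cadj \<rho> = \<rho>
     \<and> (\<forall>x :: complex^'n. 0 \<le> Re (\<Sum>i\<in>UNIV. \<Sum>j\<in>UNIV. cnj (x $ i) * \<rho> $ i $ j * x $ j))
     \<and> trace \<rho> = 1"

definition haar_unitary :: "(complex^'n^'n) measure \<Rightarrow> bool" where
  "haar_unitary \<mu> \<longleftrightarrow> prob_space \<mu> \<and> sets \<mu> = sets borel
     \<and> emeasure \<mu> {U. unitary_mat U} = 1
     \<and> (\<forall>V. unitary_mat V \<longrightarrow> distr \<mu> borel (\<lambda>U. V ** U) = \<mu>)"

definition Phi3 :: "(complex^'n^'n) measure \<Rightarrow> complex^('n \<times> 'n \<times> 'n)^('n \<times> 'n \<times> 'n)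
                     \<Rightarrow> complex^('n \<times> 'n \<times> 'n)^('n \<times> 'n \<times> 'n)" where
  "Phi3 \<mu> X = integral\<^sup>L \<mu> (\<lambda>U. tensor3 U ** X ** cadj (tensor3 U))"

definition unitary_3design :: "(complex^'n^'n) measure \<Rightarrow> bool" where
  "unitary_3design \<mu> \<longleftrightarrow> prob_space \<mu> \<and> sets \<mu> = sets borel
     \<and> (AE U in \<mu>. unitary_mat U)
     \<and> (\<exists>\<nu>. haar_unitary \<nu> \<and> (\<forall>X. Phi3 \<mu> X = Phi3 \<nu> X))"

definition wt :: "'a \<times> 'a \<times> 'a \<Rightarrow> nat" where
  "wt a = (case a of (a1, a2, a3) \<Rightarrow>
     (if a1 = a2 \<and> a2 = a3 then 3 else if a1 = a2 \<or> a2 = a3 \<or> a1 = a3 then 2 else 1))"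

definition O_plus :: "complex^('n::finite \<times> 'n \<times> 'n)^('n \<times> 'n \<times> 'n)" where
  "O_plus = (\<chi> a b. if a = b then 1 + (- of_nat CARD('n)) ^ (wt a - 1) else 0)"

end

theory Submission
  imports Defs
begin

text \<open>
  Put \<open>\<sigma> = U\<^sup>* \<rho> U\<close>. By cyclicity of the trace the integrand is
  \<open>Tr (O\<^sub>+\<^sup>2 \<sigma>\<^sup>\<otimes>\<^sup>3)\<close>, and \<open>O\<^sub>+\<^sup>2\<close> is diagonal with eigenvalue
  \<open>4 + (d\<^sup>2 - 2d - 3) \<cdot> #(equal pairs) + (d\<^sup>4 - d\<^sup>2 + 6d + 6) \<cdot> [a\<^sub>1 = a\<^sub>2 = a\<^sub>3]\<close>
  at \<open>|a\<rangle>\<close>. As \<open>Tr \<sigma> = 1\<close>, the integrand is therefore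
  \<open>4 + 3 (d\<^sup>2 - 2d - 3) \<Sum>\<^sub>j \<sigma>\<^sub>j\<^sub>j\<^sup>2 + (d\<^sup>4 - d\<^sup>2 + 6d + 6) \<Sum>\<^sub>j \<sigma>\<^sub>j\<^sub>j\<^sup>3\<close>,
  where \<open>\<sigma>\<^sub>j\<^sub>j = \<langle>u, \<rho> u\<rangle>\<close> for the \<open>j\<close>-th column \<open>u\<close> of \<open>U\<close>.

  So only the third moments of a Haar-random column are needed:
  \<open>E[u\<^sub>b u\<^sub>e u\<^sub>g conj (u\<^sub>a u\<^sub>c u\<^sub>h)]\<close> is the number of permutations carrying
  \<open>(b, e, g)\<close> to \<open>(a, c, h)\<close>, divided by \<open>d (d + 1) (d + 2)\<close>. This follows from left
  invariance alone: diagonal phases kill the monomials whose indices do not match, permutation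
  matrices make the moments symmetric, a Hadamard rotation of two coordinates gives
  \<open>E|u\<^sub>p|\<^sup>4 = 2 E|u\<^sub>p|\<^sup>2|u\<^sub>q|\<^sup>2\<close> and \<open>E|u\<^sub>p|\<^sup>6 = 3 E|u\<^sub>p|\<^sup>4|u\<^sub>q|\<^sup>2\<close>, and
  \<open>\<Sum>\<^sub>a |u\<^sub>a|\<^sup>2 = 1\<close> fixes the normalisation. A unitary 3-design has, by definition,
  the same threefold twirl as Haar measure.
\<close>

lemma unitary_mat_column_norm:
  assumes "unitary_mat U"
  shows "(\<Sum>a\<in>UNIV. U$a$j * cnj (U$a$j)) = 1"
proof -
  have "(cadj U ** U)$j$j = 1"
    using assms by (simp add: unitary_mat_def mat_def)
  then show ?thesis
    by (simp add: cadj_def matrix_matrix_mult_def mult.commute)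
qed

lemma unitary_mat_right_inverse: "unitary_mat U \<Longrightarrow> U ** cadj U = mat 1"
  unfolding unitary_mat_def by (rule matrix_left_right_inverse1)

lemma norm_unitary_mat:
  fixes U :: "complex^'n^'n"
  assumes "unitary_mat U"
  shows "norm U = sqrt CARD('n)"
proof -
  have column: "(\<Sum>a\<in>UNIV. (cmod (U$a$j))\<^sup>2) = 1" for j
  proof -
    have "complex_of_real (\<Sum>a\<in>UNIV. (cmod (U$a$j))\<^sup>2) = 1"
      by (simp only: of_real_sum complex_norm_square unitary_mat_column_norm [OF assms])
    then show ?thesis
      using of_real_eq_1_iff by blast
  qed
  have "(norm U)\<^sup>2 = (\<Sum>a\<in>UNIV. \<Sum>j\<in>UNIV. (cmod (U$a$j))\<^sup>2)"
    by (simp add: norm_vec_def L2_set_def sum_nonneg)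
  also have "\<dots> = CARD('n)"
    by (subst sum.swap) (simp add: column)
  finally show ?thesis
    by (simp add: real_sqrt_unique)
qed

lemma compact_unitary_mats: "compact {U::complex^'n^'n. unitary_mat U}"
proof -
  have "bounded {U::complex^'n^'n. unitary_mat U}"
    unfolding bounded_iff using norm_unitary_mat by force
  moreover have "closed {U::complex^'n^'n. cadj U ** U = mat 1}"
    unfolding cadj_def matrix_matrix_mult_def
    by (intro closed_Collect_eq continuous_intros continuous_on_vec_lambda)
  ultimately show ?thesis
    by (simp add: compact_eq_bounded_closed unitary_mat_def)
qed

lemma integrable_continuous_on_unitaries:
  fixes g :: "complex^'n^'n \<Rightarrow> 'b::{banach,second_countable_topology}"
  assumes "prob_space \<mu>" "sets \<mu> = sets borel" "AE U in \<mu>. unitary_mat U"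
    and "continuous_on UNIV g"
  shows "integrable \<mu> g"
proof -
  have "bounded (g ` {U. unitary_mat U})"
    using assms(4) by (intro compact_imp_bounded compact_continuous_image compact_unitary_mats)
      (auto intro: continuous_on_subset)
  then obtain B where "\<And>U. unitary_mat U \<Longrightarrow> norm (g U) \<le> B"
    unfolding bounded_iff by blast
  then have "AE U in \<mu>. norm (g U) \<le> B"
    using assms(3) by auto
  moreover have "g \<in> borel_measurable \<mu>"
    using borel_measurable_continuous_onI [OF assms(4)] measurable_cong_sets [OF assms(2) refl]
    by blast
  ultimately show ?thesis
    using assms(1) prob_space.finite_measure finite_measure.integrable_const_bound by blast
qed

lemma haar_unitary_AE_unitary:
  assumes "haar_unitary \<mu>"
  shows "AE U in \<mu>. unitary_mat U"
proof -
  have "prob_space \<mu>" "measure \<mu> {U. unitary_mat U} = 1"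
    using assms by (simp_all add: haar_unitary_def measure_def)
  then show ?thesis
    using prob_space.AE_prob_1 by force
qed

lemma integrable_haar_continuous:
  fixes g :: "complex^'n^'n \<Rightarrow> 'b::{banach,second_countable_topology}"
  assumes "haar_unitary \<mu>" "continuous_on UNIV g"
  shows "integrable \<mu> g"
  using assms haar_unitary_AE_unitary [OF assms(1)]
  by (intro integrable_continuous_on_unitaries) (auto simp: haar_unitary_def)

lemma borel_measurable_haar_continuous:
  fixes g :: "complex^'n^'n \<Rightarrow> 'b::topological_space"
  assumes "haar_unitary \<mu>" "continuous_on UNIV g"
  shows "g \<in> borel_measurable \<mu>"
  using assms measurable_cong_sets borel_measurable_continuous_onI by (metis haar_unitary_def)

lemma integral_haar_left_invariant:
  fixes g :: "complex^'n^'n \<Rightarrow> 'b::{banach,second_countable_topology}"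
  assumes "haar_unitary \<mu>" "unitary_mat V" "g \<in> borel_measurable borel"
  shows "(\<integral>U. g (V ** U) \<partial>\<mu>) = integral\<^sup>L \<mu> g"
proof -
  have sets: "sets \<mu> = sets borel" and invariant: "distr \<mu> borel (\<lambda>U. V ** U) = \<mu>"
    using assms(1,2) by (auto simp: haar_unitary_def)
  have "(\<lambda>U. V ** U) \<in> borel_measurable \<mu>"
    unfolding measurable_cong_sets [OF sets refl] matrix_matrix_mult_def
    by (intro borel_measurable_continuous_onI continuous_intros continuous_on_vec_lambda)
  then show ?thesis
    using integral_distr [OF _ assms(3)] invariant by metis
qed

section \<open>Diagonal phases, permutations and a Hadamard rotation\<close>

definition phase_mat :: "'n::finite \<Rightarrow> complex \<Rightarrow> complex^'n^'n" where
  "phase_mat t w = (\<chi> a b. if a = b then (if a = t then w else 1) else 0)"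

lemma phase_mat_mult: "(phase_mat t w ** U)$a$j = (if a = t then w else 1) * U$a$j"
  by (simp add: phase_mat_def matrix_matrix_mult_def mult_delta_left mult_delta_right
      cong: if_cong)

lemma unitary_phase_mat: "cnj w * w = 1 \<Longrightarrow> unitary_mat (phase_mat t w)"
  by (simp add: unitary_mat_def vec_eq_iff cadj_def phase_mat_def matrix_matrix_mult_def mat_def
      mult_delta_left mult_delta_right cong: if_cong)

definition perm_mat :: "('n::finite \<Rightarrow> 'n) \<Rightarrow> complex^'n^'n" where
  "perm_mat \<sigma> = (\<chi> a b. if b = \<sigma> a then 1 else 0)"

lemma perm_mat_mult: "(perm_mat \<sigma> ** U)$a$j = U$(\<sigma> a)$j"
  by (simp add: perm_mat_def matrix_matrix_mult_def mult_delta_left mult_delta_right cong: if_cong)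

lemma unitary_perm_mat:
  assumes "\<sigma> permutes UNIV"
  shows "unitary_mat (perm_mat \<sigma>)"
proof -
  have "(\<Sum>k\<in>UNIV. if a = \<sigma> k then f k else 0) = f (inv \<sigma> a)" for a and f :: "_ \<Rightarrow> complex"
  proof -
    have "a = \<sigma> k \<longleftrightarrow> k = inv \<sigma> a" for k
      using permutes_inv_eq [OF assms] by metis
    then show ?thesis
      by simp
  qed
  then show ?thesis
    by (simp add: unitary_mat_def vec_eq_iff cadj_def perm_mat_def matrix_matrix_mult_def mat_def
        permutes_inverses(1) [OF assms] mult_delta_left mult_delta_right cong: if_cong)
qed

definition inv_sqrt2 :: complex where
  "inv_sqrt2 = of_real (1 / sqrt 2)"

lemma inv_sqrt2_square: "inv_sqrt2 * (inv_sqrt2 * z) = z / 2"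
  by (simp add: inv_sqrt2_def mult.assoc [symmetric] flip: of_real_mult)

lemma cnj_inv_sqrt2 [simp]: "cnj inv_sqrt2 = inv_sqrt2"
  by (simp add: inv_sqrt2_def)

definition hadamard_mat :: "'n::finite \<Rightarrow> 'n \<Rightarrow> complex^'n^'n" where
  "hadamard_mat p q = (\<chi> a c.
     if a = p then inv_sqrt2 * ((if c = p then 1 else 0) + (if c = q then 1 else 0))
     else if a = q then inv_sqrt2 * ((if c = p then 1 else 0) - (if c = q then 1 else 0))
     else (if a = c then 1 else 0))"

lemma hadamard_mat_row:
  assumes "p \<noteq> q"
  shows "(\<Sum>c\<in>UNIV. hadamard_mat p q $ a $ c * f c) =
    (if a = p then inv_sqrt2 * (f p + f q) else if a = q then inv_sqrt2 * (f p - f q) else f a)"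
  using assms
  by (simp add: hadamard_mat_def algebra_simps sum.distrib sum_subtractf mult_delta_right
      flip: sum_distrib_left)

lemma unitary_hadamard_mat:
  assumes "p \<noteq> q"
  shows "unitary_mat (hadamard_mat p q)"
proof -
  have "cadj (hadamard_mat p q) = hadamard_mat p q"
    by (auto simp: vec_eq_iff cadj_def hadamard_mat_def)
  moreover have "hadamard_mat p q ** hadamard_mat p q = mat 1"
    unfolding vec_eq_iff matrix_matrix_mult_def vec_lambda_beta hadamard_mat_row [OF assms]
    using assms by (auto simp: hadamard_mat_def mat_def algebra_simps inv_sqrt2_square)
  ultimately show ?thesis
    by (simp add: unitary_mat_def)
qed

lemma sum_UNIV_triple:
  "(\<Sum>x\<in>UNIV. h x) = (\<Sum>a\<in>UNIV. \<Sum>b\<in>UNIV. \<Sum>c\<in>UNIV. h (a, b, c))"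
  by (simp add: sum.cartesian_product)

lemma trace_mult_expand: "trace (A ** B) = (\<Sum>a\<in>UNIV. \<Sum>b\<in>UNIV. A$a$b * B$b$a)"
  by (simp add: trace_def matrix_matrix_mult_def)

lemma trace_mult3_expand:
  "trace (A ** B ** C) = (\<Sum>a\<in>UNIV. \<Sum>b\<in>UNIV. \<Sum>c\<in>UNIV. A$a$b * B$b$c * C$c$a)"
proof -
  have "trace (A ** B ** C) = (\<Sum>a\<in>UNIV. \<Sum>c\<in>UNIV. \<Sum>b\<in>UNIV. A$a$b * B$b$c * C$c$a)"
    by (simp add: trace_def matrix_matrix_mult_def sum_distrib_right)
  also have "\<dots> = (\<Sum>a\<in>UNIV. \<Sum>b\<in>UNIV. \<Sum>c\<in>UNIV. A$a$b * B$b$c * C$c$a)"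
    by (rule sum.cong [OF refl], rule sum.swap)
  finally show ?thesis .
qed

lemma diag_conj_expand:
  "(cadj U ** A ** U)$j$j = (\<Sum>a\<in>UNIV. \<Sum>b\<in>UNIV. cnj (U$a$j) * A$a$b * U$b$j)"
proof -
  have "(cadj U ** A ** U)$j$j = (\<Sum>b\<in>UNIV. \<Sum>a\<in>UNIV. cnj (U$a$j) * A$a$b * U$b$j)"
    by (simp add: cadj_def matrix_matrix_mult_def sum_distrib_right)
  also have "\<dots> = (\<Sum>a\<in>UNIV. \<Sum>b\<in>UNIV. cnj (U$a$j) * A$a$b * U$b$j)"
    by (rule sum.swap)
  finally show ?thesis .
qed

lemma continuous_on_diag_conj [continuous_intros]:
  "continuous_on S (\<lambda>U. (cadj U ** A ** U)$j$j)"
  unfolding diag_conj_expand by (intro continuous_intros)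

lemma bounded_linear_trace_mult: "bounded_linear (\<lambda>Y :: complex^'m^'m. trace (Y ** R))"
proof -
  have "linear (\<lambda>Y :: complex^'m^'m. trace (Y ** R))"
    by (rule linearI)
      (simp_all add: trace_mult_expand distrib_right sum.distrib scaleR_sum_right)
  then show ?thesis
    by (simp only: linear_conv_bounded_linear)
qed

lemma trace_integral_mult:
  fixes G :: "'a \<Rightarrow> complex^'m^'m"
  assumes "integrable M G"
  shows "trace (integral\<^sup>L M G ** R) = (\<integral>x. trace (G x ** R) \<partial>M)"
  using integral_bounded_linear [OF bounded_linear_trace_mult assms] by simp

lemma continuous_on_trace_mult [continuous_intros]:
  fixes f :: "'a::topological_space \<Rightarrow> complex^'m^'m"
  shows "continuous_on S f \<Longrightarrow> continuous_on S (\<lambda>x. trace (f x ** R))"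
  by (rule bounded_linear.continuous_on [OF bounded_linear_trace_mult])

lemma cadj_tensor3: "cadj (tensor3 U) = tensor3 (cadj U)"
  by (simp add: cadj_def tensor3_def vec_eq_iff)

lemma tensor3_mult: "tensor3 A ** tensor3 B = tensor3 (A ** B)"
proof -
  have "(tensor3 A ** tensor3 B) $ (a1, a2, a3) $ (c1, c2, c3)
      = tensor3 (A ** B) $ (a1, a2, a3) $ (c1, c2, c3)" for a1 a2 a3 c1 c2 c3
    unfolding tensor3_def matrix_matrix_mult_def vec_lambda_beta sum_UNIV_triple fst_conv snd_conv
      mult.assoc
    by (simp only: sum_distrib_right, simp only: sum_distrib_left, simp add: mult_ac)
  then show ?thesis
    by (simp add: vec_eq_iff)
qed

lemma continuous_on_conj_tensor3 [continuous_intros]: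
  "continuous_on S (\<lambda>U :: complex^'n::finite^'n. tensor3 U ** X ** cadj (tensor3 U))"
  unfolding tensor3_def cadj_def matrix_matrix_mult_def by (intro continuous_intros)

lemma trace_unitary_conj:
  assumes "unitary_mat U"
  shows "trace (cadj U ** A ** U) = trace A"
proof -
  have "trace (cadj U ** A ** U) = trace (U ** (cadj U ** A))"
    by (rule trace_mul_sym)
  also have "\<dots> = trace A"
    by (simp add: matrix_mul_assoc unitary_mat_right_inverse [OF assms])
  finally show ?thesis .
qed

lemma trace_conj_tensor3:
  "trace (tensor3 U ** X ** cadj (tensor3 U) ** tensor3 A)
     = trace (X ** tensor3 (cadj U ** A ** U))"
proof -
  let ?T = "tensor3 U"
  have "trace (?T ** X ** cadj ?T ** tensor3 A) = trace (?T ** (X ** (cadj ?T ** tensor3 A)))"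
    by (simp add: matrix_mul_assoc)
  also have "\<dots> = trace (X ** (cadj ?T ** tensor3 A) ** ?T)"
    by (rule trace_mul_sym)
  also have "\<dots> = trace (X ** (cadj ?T ** tensor3 A ** ?T))"
    by (simp add: matrix_mul_assoc)
  finally show ?thesis
    by (simp add: cadj_tensor3 tensor3_mult)
qed

lemma trace_diag_mult:
  "trace ((\<chi> x y. if x = y then g x else 0) ** Y) = (\<Sum>x\<in>UNIV. g x * Y$x$x)"
  by (simp add: trace_def matrix_matrix_mult_def mult_delta_left cong: if_cong)

lemma sum_UNIV_point_plus_const:
  fixes f :: "'n::finite \<Rightarrow> 'a::comm_ring_1"
  assumes "\<And>b. b \<noteq> a \<Longrightarrow> f b = c"
  shows "(\<Sum>b\<in>UNIV. f b) = f a + (of_nat CARD('n) - 1) * c"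
proof -
  have "(\<Sum>b\<in>UNIV. f b) = f a + (\<Sum>b\<in>UNIV - {a}. f b)"
    by (simp add: sum.remove)
  also have "(\<Sum>b\<in>UNIV - {a}. f b) = of_nat (CARD('n) - 1) * c"
    using assms by (simp add: card_Diff_singleton)
  finally show ?thesis
    by (simp add: Suc_le_eq)
qed

lemma sum_UNIV_two_points_plus_const:
  fixes f :: "'n::finite \<Rightarrow> 'a::comm_ring_1"
  assumes "a \<noteq> b" and "\<And>e. e \<noteq> a \<Longrightarrow> e \<noteq> b \<Longrightarrow> f e = c"
  shows "(\<Sum>e\<in>UNIV. f e) = f a + f b + (of_nat CARD('n) - 2) * c"
proof -
  have "CARD('n) \<ge> 2"
    using card_mono [of UNIV "{a, b}"] assms(1) by simp
  then have card: "(of_nat (CARD('n) - 2) :: 'a) = of_nat CARD('n) - 2"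
    by simp
  have "(\<Sum>e\<in>UNIV. f e) = f a + f b + (\<Sum>e\<in>UNIV - {a} - {b}. f e)"
    using assms(1) by (simp add: sum.remove [of UNIV a] sum.remove [of "UNIV - {a}" b])
  also have "(\<Sum>e\<in>UNIV - {a} - {b}. f e) = of_nat (CARD('n) - 2) * c"
    using assms by (simp add: card_Diff_singleton numeral_2_eq_2)
  finally show ?thesis
    by (simp only: card)
qed

lemma of_nat_card_nonzero:
  "(of_nat CARD('n::finite) :: 'a::semiring_char_0) \<noteq> 0"
  "(of_nat CARD('n) :: 'a) + 1 \<noteq> 0" "(of_nat CARD('n) :: 'a) + 2 \<noteq> 0"
proof -
  have *: "(of_nat (CARD('n) + k) :: 'a) \<noteq> 0" for k
    by (simp only: of_nat_eq_0_iff) simp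
  show "(of_nat CARD('n) :: 'a) \<noteq> 0"
    using * [of 0] by simp
  show "(of_nat CARD('n) :: 'a) + 1 \<noteq> 0"
    using * [of 1] unfolding of_nat_add of_nat_1 .
  show "(of_nat CARD('n) :: 'a) + 2 \<noteq> 0"
    using * [of 2] unfolding of_nat_add of_nat_numeral .
qed

lemma sum_fourth_roots_unity:
  "(\<Sum>w\<in>{1, \<i>, -1, -\<i>}. f w) = f 1 + f \<i> + f (-1) + f (-\<i>)"
  by (simp add: complex_eq_iff add.assoc)

lemma sum_fourth_roots_power2:
  fixes a b A B :: complex
  shows "(\<Sum>w\<in>{1, \<i>, -1, -\<i>}. ((w * a + b) * (cnj w * A + B))\<^sup>2)
    = 4 * ((a * A)\<^sup>2 + (b * B)\<^sup>2 + 4 * (a * A) * (b * B))"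
proof -
  have "\<i> * \<i> = (-1::complex)"
    by simp
  then show ?thesis
    unfolding sum_fourth_roots_unity complex_cnj_one complex_cnj_i complex_cnj_minus by algebra
qed

lemma sum_fourth_roots_power3:
  fixes a b A B :: complex
  shows "(\<Sum>w\<in>{1, \<i>, -1, -\<i>}. ((w * a + b) * (cnj w * A + B)) ^ 3)
    = 4 * ((a * A) ^ 3 + (b * B) ^ 3 + 9 * (a * A)\<^sup>2 * (b * B) + 9 * (a * A) * (b * B)\<^sup>2)"
proof -
  have "\<i> * \<i> = (-1::complex)"
    by simp
  then show ?thesis
    unfolding sum_fourth_roots_unity complex_cnj_one complex_cnj_i complex_cnj_minus by algebra
qed

lemma i_power_neq_1:
  assumes "n \<le> 3" "m \<le> 3" "n \<noteq> m"
  shows "\<i> ^ n * (- \<i>) ^ m \<noteq> 1"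
proof -
  have "n \<in> {0, 1, 2, 3}" "m \<in> {0, 1, 2, 3}"
    using assms(1,2) by auto
  then show ?thesis
    using assms(3) by (auto simp: power_numeral_odd power_numeral_even numeral_3_eq_3 complex_eq_iff)
qed

definition perm_count3 :: "'a \<Rightarrow> 'a \<Rightarrow> 'a \<Rightarrow> 'a \<Rightarrow> 'a \<Rightarrow> 'a \<Rightarrow> complex" where
  "perm_count3 a b c a' b' c' =
     (if (a', b', c') = (a, b, c) then 1 else 0) + (if (a', b', c') = (a, c, b) then 1 else 0)
   + (if (a', b', c') = (b, a, c) then 1 else 0) + (if (a', b', c') = (b, c, a) then 1 else 0)
   + (if (a', b', c') = (c, a, b) then 1 else 0) + (if (a', b', c') = (c, b, a) then 1 else 0)"

lemma mset3_eq_cases: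
  assumes "mset [a', b', c'] = mset [a, b, c]"
  shows "(a', b', c') = (a, b, c) \<or> (a', b', c') = (a, c, b) \<or> (a', b', c') = (b, a, c)
    \<or> (a', b', c') = (b, c, a) \<or> (a', b', c') = (c, a, b) \<or> (a', b', c') = (c, b, a)"
  using assms by (auto simp: add_eq_conv_ex)

lemma perm_count3_self:
  "perm_count3 a b c a b c = (if a = b \<and> b = c then 6 else if a = b \<or> b = c \<or> a = c then 2 else 1)"
  by (cases "a = b"; cases "b = c"; cases "a = c") (simp_all add: perm_count3_def)

lemma perm_count3_rearrange:
  assumes "mset [a', b', c'] = mset [a, b, c]"
  shows "perm_count3 a b c a' b' c' = perm_count3 a b c a b c"
  using mset3_eq_cases [OF assms]
  by (elim disjE; cases "a = b"; cases "b = c"; cases "a = c") (simp_all add: perm_count3_def)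

lemma perm_count3_eq_0:
  assumes "mset [a', b', c'] \<noteq> mset [a, b, c]"
  shows "perm_count3 a b c a' b' c' = 0"
proof -
  have "(a', b', c') \<notin> {(a, b, c), (a, c, b), (b, a, c), (b, c, a), (c, a, b), (c, b, a)}"
    using assms by (auto simp: add_mset_commute)
  then show ?thesis
    unfolding perm_count3_def by (simp del: prod.inject)
qed

lemma sum_perm_count3:
  fixes A B C :: "complex^'n::finite^'n"
  shows "(\<Sum>a\<in>UNIV. \<Sum>b\<in>UNIV. \<Sum>c\<in>UNIV. \<Sum>e\<in>UNIV. \<Sum>h\<in>UNIV. \<Sum>g\<in>UNIV.
      A$a$b * B$c$e * C$h$g * perm_count3 b e g a c h)
    = trace A * trace B * trace C + trace A * trace (B ** C) + trace B * trace (A ** C)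
      + trace C * trace (A ** B) + trace (A ** B ** C) + trace (A ** C ** B)"
proof -
  have if_conj: "(if P \<and> Q then 1 else 0) = (if P then (if Q then 1 else 0) else (0::complex))" for P Q
    by simp
  have sum_if: "(\<Sum>x\<in>UNIV. if P then f x else 0) = (if P then (\<Sum>x\<in>UNIV. f x) else (0::complex))"
    for P and f :: "'n \<Rightarrow> complex"
    by simp
  have "(\<Sum>a\<in>UNIV. \<Sum>c\<in>UNIV. \<Sum>h\<in>UNIV. A$a$a * B$c$c * C$h$h) = trace A * (trace B * trace C)"
    "(\<Sum>a\<in>UNIV. \<Sum>c\<in>UNIV. \<Sum>e\<in>UNIV. A$a$a * B$c$e * C$e$c) = trace A * trace (B ** C)"
    unfolding trace_mult_expand unfolding trace_def sum_product
    by (simp_all add: sum_distrib_left mult.assoc)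
  moreover have
    "(\<Sum>a\<in>UNIV. \<Sum>b\<in>UNIV. \<Sum>h\<in>UNIV. A$a$b * B$b$a * C$h$h) = trace (A ** B) * trace C"
    "(\<Sum>a\<in>UNIV. \<Sum>b\<in>UNIV. \<Sum>c\<in>UNIV. A$a$b * B$c$a * C$b$c) = trace (A ** C ** B)"
    "(\<Sum>a\<in>UNIV. \<Sum>b\<in>UNIV. \<Sum>e\<in>UNIV. A$a$b * B$b$e * C$e$a) = trace (A ** B ** C)"
    "(\<Sum>a\<in>UNIV. \<Sum>b\<in>UNIV. \<Sum>c\<in>UNIV. A$a$b * B$c$c * C$b$a) = trace (A ** C) * trace B"
    unfolding trace_mult3_expand unfolding trace_mult_expand
    by (simp_all add: trace_def sum_distrib_left sum_distrib_right mult_ac)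
  ultimately show ?thesis
    by (simp add: perm_count3_def if_conj distrib_left sum.distrib mult_delta_left mult_delta_right sum_if
        ac_simps)
qed

section \<open>Moments of a column of a Haar unitary\<close>

locale haar_column =
  fixes \<mu> :: "(complex^'n::finite^'n) measure" and i :: 'n and d :: complex
  defines "d \<equiv> of_nat CARD('n)"
  assumes haar: "haar_unitary \<mu>"
begin

lemma d_nonzero: "d \<noteq> 0" "d + 1 \<noteq> 0" "d + 2 \<noteq> 0"
  using of_nat_card_nonzero by (simp_all add: d_def)

lemma integrable_continuous:
  fixes g :: "complex^'n^'n \<Rightarrow> 'b::{banach,second_countable_topology}"
  shows "continuous_on UNIV g \<Longrightarrow> integrable \<mu> g"
  by (rule integrable_haar_continuous [OF haar])

lemma borel_measurable_continuous:
  fixes g :: "complex^'n^'n \<Rightarrow> 'b::topological_space"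
  shows "continuous_on UNIV g \<Longrightarrow> g \<in> borel_measurable \<mu>"
  by (rule borel_measurable_haar_continuous [OF haar])

lemma integral_left_invariant:
  fixes g :: "complex^'n^'n \<Rightarrow> complex"
  shows "unitary_mat V \<Longrightarrow> continuous_on UNIV g
    \<Longrightarrow> (\<integral>U. g (V ** U) \<partial>\<mu>) = integral\<^sup>L \<mu> g"
  by (rule integral_haar_left_invariant [OF haar _ borel_measurable_continuous_onI])

definition weight :: "'n \<Rightarrow> complex^'n^'n \<Rightarrow> complex" where
  "weight a U = U$a$i * cnj (U$a$i)"

lemma continuous_on_weight [continuous_intros]: "continuous_on S (weight a)"
  unfolding weight_def by (intro continuous_intros)

lemma integrable_weights [simp]:
  "integrable \<mu> (weight a)"
  "integrable \<mu> (\<lambda>U. weight a U * weight b U)"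
  "integrable \<mu> (\<lambda>U. weight a U * weight b U * weight c U)"
  by (intro integrable_continuous continuous_intros)+

lemma integral_mult_sum_weight:
  fixes f :: "complex^'n^'n \<Rightarrow> complex"
  assumes "continuous_on UNIV f"
  shows "(\<integral>U. f U * (\<Sum>a\<in>UNIV. weight a U) \<partial>\<mu>) = integral\<^sup>L \<mu> f"
proof (rule integral_cong_AE)
  show "AE U in \<mu>. f U * (\<Sum>a\<in>UNIV. weight a U) = f U"
    using haar_unitary_AE_unitary [OF haar]
    by (rule eventually_mono) (simp add: weight_def unitary_mat_column_norm)
qed (intro borel_measurable_continuous continuous_intros assms)+

definition moment1 :: "'n \<Rightarrow> complex" where
  "moment1 a = (\<integral>U. weight a U \<partial>\<mu>)"

definition moment2 :: "'n \<Rightarrow> 'n \<Rightarrow> complex" where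
  "moment2 a b = (\<integral>U. weight a U * weight b U \<partial>\<mu>)"

definition moment3 :: "'n \<Rightarrow> 'n \<Rightarrow> 'n \<Rightarrow> complex" where
  "moment3 a b c = (\<integral>U. weight a U * weight b U * weight c U \<partial>\<mu>)"

lemma sum_moment1: "(\<Sum>a\<in>UNIV. moment1 a) = 1"
proof -
  have "(\<Sum>a\<in>UNIV. moment1 a) = (\<integral>U. 1 * (\<Sum>a\<in>UNIV. weight a U) \<partial>\<mu>)"
    by (simp add: moment1_def)
  also have "\<dots> = 1"
    using integral_mult_sum_weight [of "\<lambda>_. 1"] haar
    by (simp add: haar_unitary_def prob_space.prob_space)
  finally show ?thesis .
qed

lemma sum_moment2: "(\<Sum>b\<in>UNIV. moment2 a b) = moment1 a"
  using integral_mult_sum_weight [of "weight a"]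
  by (simp add: moment1_def moment2_def sum_distrib_left continuous_on_weight)

lemma sum_moment3: "(\<Sum>c\<in>UNIV. moment3 a b c) = moment2 a b"
  using integral_mult_sum_weight [of "\<lambda>U. weight a U * weight b U"]
  by (simp add: moment2_def moment3_def sum_distrib_left continuous_on_mult continuous_on_weight)

lemma weight_perm_mat: "weight a (perm_mat \<sigma> ** U) = weight (\<sigma> a) U"
  by (simp add: weight_def perm_mat_mult)

lemma moments_permute:
  assumes "\<sigma> permutes UNIV"
  shows "moment1 (\<sigma> a) = moment1 a" "moment2 (\<sigma> a) (\<sigma> b) = moment2 a b"
    "moment3 (\<sigma> a) (\<sigma> b) (\<sigma> c) = moment3 a b c"
proof -
  have invariant: "(\<integral>U. g (perm_mat \<sigma> ** U) \<partial>\<mu>) = integral\<^sup>L \<mu> g"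
    if "continuous_on UNIV g" for g :: "_ \<Rightarrow> complex"
    using integral_left_invariant [OF unitary_perm_mat [OF assms] that] .
  show "moment1 (\<sigma> a) = moment1 a"
    using invariant [of "weight a"] by (simp add: moment1_def weight_perm_mat continuous_on_weight)
  show "moment2 (\<sigma> a) (\<sigma> b) = moment2 a b"
    using invariant [of "\<lambda>U. weight a U * weight b U"]
    by (simp add: moment2_def weight_perm_mat continuous_on_mult continuous_on_weight)
  show "moment3 (\<sigma> a) (\<sigma> b) (\<sigma> c) = moment3 a b c"
    using invariant [of "\<lambda>U. weight a U * weight b U * weight c U"]
    by (simp add: moment3_def weight_perm_mat continuous_on_mult continuous_on_weight)
qed

lemma moments_transpose:
  "moment1 b = moment1 a" "moment2 b b = moment2 a a" "moment3 b b b = moment3 a a a"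
  "moment3 b b a = moment3 a a b"
  using moments_permute(1) [OF permutes_swap_id [of a UNIV b], of a]
    moments_permute(2) [OF permutes_swap_id [of a UNIV b], of a a]
    moments_permute(3) [OF permutes_swap_id [of a UNIV b], of a a a]
    moments_permute(3) [OF permutes_swap_id [of a UNIV b], of a a b]
  by simp_all

text \<open>
  The Hadamard rotation of the coordinates \<open>p\<close>, \<open>q\<close> turns \<open>|u\<^sub>p|\<^sup>2\<close> into
  \<open>|u\<^sub>p + u\<^sub>q|\<^sup>2 / 2\<close>. Averaging the powers of \<open>|w u\<^sub>p + u\<^sub>q|\<^sup>2\<close> over the phases
  \<open>w \<in> {1, \<i>, -1, -\<i>}\<close>, which does not change their integrals, leaves only the
  products of \<open>|u\<^sub>p|\<^sup>2\<close> and \<open>|u\<^sub>q|\<^sup>2\<close>.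
\<close>

definition mixed_weight :: "'n \<Rightarrow> 'n \<Rightarrow> complex \<Rightarrow> complex^'n^'n \<Rightarrow> complex" where
  "mixed_weight p q w U = (w * U$p$i + U$q$i) * (cnj w * cnj (U$p$i) + cnj (U$q$i))"

lemma continuous_on_mixed_weight [continuous_intros]: "continuous_on S (mixed_weight p q w)"
  unfolding mixed_weight_def by (intro continuous_intros)

lemma integral_mixed_weight_phase:
  assumes "p \<noteq> q" "cnj w * w = 1"
  shows "(\<integral>U. mixed_weight p q w U ^ k \<partial>\<mu>) = (\<integral>U. mixed_weight p q 1 U ^ k \<partial>\<mu>)"
proof -
  have "(\<integral>U. mixed_weight p q 1 (phase_mat p w ** U) ^ k \<partial>\<mu>)
      = (\<integral>U. mixed_weight p q 1 U ^ k \<partial>\<mu>)"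
    by (rule integral_left_invariant [OF unitary_phase_mat [OF assms(2)]])
      (intro continuous_intros)
  moreover have "mixed_weight p q 1 (phase_mat p w ** U) = mixed_weight p q w U" for U
    using assms(1) by (simp add: mixed_weight_def phase_mat_mult)
  ultimately show ?thesis
    by simp
qed

lemma integral_sum_fourth_roots_mixed_weight:
  assumes "p \<noteq> q"
  shows "(\<integral>U. (\<Sum>w\<in>{1, \<i>, -1, -\<i>}. mixed_weight p q w U ^ k) \<partial>\<mu>)
    = 4 * (\<integral>U. mixed_weight p q 1 U ^ k \<partial>\<mu>)"
proof -
  have "integrable \<mu> (\<lambda>U. mixed_weight p q w U ^ k)" for w
    by (intro integrable_continuous continuous_intros)
  then show ?thesis
    using integral_mixed_weight_phase [OF assms, of \<i>]
      integral_mixed_weight_phase [OF assms, of "-1"] integral_mixed_weight_phase [OF assms, of "-\<i>"]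
    by (simp add: sum_fourth_roots_unity)
qed

lemma sum_fourth_roots_mixed_weight:
  "(\<Sum>w\<in>{1, \<i>, -1, -\<i>}. (mixed_weight p q w U)\<^sup>2)
     = 4 * ((weight p U)\<^sup>2 + (weight q U)\<^sup>2 + 4 * weight p U * weight q U)"
  "(\<Sum>w\<in>{1, \<i>, -1, -\<i>}. mixed_weight p q w U ^ 3)
     = 4 * (weight p U ^ 3 + weight q U ^ 3 + 9 * (weight p U)\<^sup>2 * weight q U
       + 9 * weight p U * (weight q U)\<^sup>2)"
  unfolding mixed_weight_def weight_def
  by (rule sum_fourth_roots_power2, rule sum_fourth_roots_power3)

lemma weight_hadamard_mat:
  assumes "p \<noteq> q"
  shows "weight p (hadamard_mat p q ** U) = mixed_weight p q 1 U / 2"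
proof -
  have "(hadamard_mat p q ** U)$p$i = inv_sqrt2 * (U$p$i + U$q$i)"
    using hadamard_mat_row [OF assms, of p "\<lambda>c. U$c$i"] by (simp add: matrix_matrix_mult_def)
  then show ?thesis
    by (simp add: weight_def mixed_weight_def mult.assoc mult.left_commute inv_sqrt2_square)
qed

lemma moment2_rotation:
  assumes "p \<noteq> q"
  shows "moment2 p p = 2 * moment2 p q"
proof -
  have "moment2 p p
      = (\<integral>U. weight p (hadamard_mat p q ** U) * weight p (hadamard_mat p q ** U) \<partial>\<mu>)"
    unfolding moment2_def
    by (rule integral_left_invariant [OF unitary_hadamard_mat [OF assms], symmetric])
      (intro continuous_intros)
  also have "\<dots> = (\<integral>U. (mixed_weight p q 1 U)\<^sup>2 \<partial>\<mu>) / 4"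
    by (simp add: weight_hadamard_mat [OF assms] power2_eq_square)
  finally have "16 * moment2 p p
      = (\<integral>U. (\<Sum>w\<in>{1, \<i>, -1, -\<i>}. (mixed_weight p q w U)\<^sup>2) \<partial>\<mu>)"
    by (simp add: integral_sum_fourth_roots_mixed_weight [OF assms] field_simps)
  also have "\<dots> = 4 * (moment2 p p + moment2 q q + 4 * moment2 p q)"
    unfolding sum_fourth_roots_mixed_weight by (simp add: moment2_def power2_eq_square)
  finally show ?thesis
    using moments_transpose(2) [of q p] by simp
qed

lemma moment3_rotation:
  assumes "p \<noteq> q"
  shows "moment3 p p p = 3 * moment3 p p q"
proof -
  have "moment3 p p p = (\<integral>U. weight p (hadamard_mat p q ** U)
      * weight p (hadamard_mat p q ** U) * weight p (hadamard_mat p q ** U) \<partial>\<mu>)"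
    unfolding moment3_def
    by (rule integral_left_invariant [OF unitary_hadamard_mat [OF assms], symmetric])
      (intro continuous_intros)
  also have "\<dots> = (\<integral>U. mixed_weight p q 1 U ^ 3 \<partial>\<mu>) / 8"
    by (simp add: weight_hadamard_mat [OF assms] power3_eq_cube)
  finally have "32 * moment3 p p p
      = (\<integral>U. (\<Sum>w\<in>{1, \<i>, -1, -\<i>}. mixed_weight p q w U ^ 3) \<partial>\<mu>)"
    by (simp add: integral_sum_fourth_roots_mixed_weight [OF assms] field_simps)
  also have "\<dots> = (\<integral>U. 4 * (weight p U * weight p U * weight p U
      + weight q U * weight q U * weight q U + 9 * (weight p U * weight p U * weight q U)
      + 9 * (weight q U * weight q U * weight p U)) \<partial>\<mu>)"
    by (rule Bochner_Integration.integral_cong [OF refl])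
      (simp only: sum_fourth_roots_mixed_weight,
        simp add: power2_eq_square power3_eq_cube algebra_simps)
  also have "\<dots> = 4 * (moment3 p p p + moment3 q q q + 9 * moment3 p p q + 9 * moment3 q q p)"
    by (simp add: moment3_def)
  finally show ?thesis
    using moments_transpose(3,4) [of q p] by simp
qed

lemma moment1_eq: "moment1 a = 1 / d"
proof -
  have "(\<Sum>b\<in>UNIV. moment1 b) = moment1 a + (d - 1) * moment1 a"
    unfolding d_def by (rule sum_UNIV_point_plus_const) (rule moments_transpose(1))
  then have "d * moment1 a = 1"
    using sum_moment1 by (simp add: algebra_simps)
  then show ?thesis
    using d_nonzero(1) by (simp add: field_simps)
qed

lemma moment2_diag_eq: "moment2 a a = 2 / (d * (d + 1))"
proof -
  have "moment2 a b = moment2 a a / 2" if "b \<noteq> a" for b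
    using moment2_rotation [of a b] that by simp
  then have "(\<Sum>b\<in>UNIV. moment2 a b) = moment2 a a + (d - 1) * (moment2 a a / 2)"
    unfolding d_def by (rule sum_UNIV_point_plus_const)
  then have "moment2 a a * (d + 1) = 2 / d"
    using sum_moment2 moment1_eq by (simp add: field_simps)
  then have "moment2 a a = 2 / d / (d + 1)"
    using d_nonzero by (simp add: eq_divide_eq ac_simps)
  then show ?thesis
    by simp
qed

lemma moment2_eq: "moment2 a b = (if a = b then 2 else 1) / (d * (d + 1))"
proof (cases "a = b")
  case False
  then have "moment2 a b = moment2 a a / 2"
    using moment2_rotation [of a b] by simp
  then show ?thesis
    using False by (simp add: moment2_diag_eq)
qed (simp add: moment2_diag_eq)

lemma moment3_diag_eq: "moment3 a a a = 6 / (d * (d + 1) * (d + 2))"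
proof -
  have "moment3 a a b = moment3 a a a / 3" if "b \<noteq> a" for b
    using moment3_rotation [of a b] that by simp
  then have "(\<Sum>b\<in>UNIV. moment3 a a b) = moment3 a a a + (d - 1) * (moment3 a a a / 3)"
    unfolding d_def by (rule sum_UNIV_point_plus_const)
  then have "moment3 a a a * (d + 2) = 6 / (d * (d + 1))"
    using sum_moment3 moment2_diag_eq by (simp add: field_simps)
  then have "moment3 a a a = 6 / (d * (d + 1)) / (d + 2)"
    using d_nonzero by (simp add: eq_divide_eq ac_simps)
  then show ?thesis
    by simp
qed

lemma moment3_commute: "moment3 a b c = moment3 b a c" "moment3 a b c = moment3 a c b"
  by (simp_all add: moment3_def mult_ac)

lemma moment3_pair_eq:
  assumes "a \<noteq> b"
  shows "moment3 a a b = 2 / (d * (d + 1) * (d + 2))"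
proof -
  have "moment3 a a b = moment3 a a a / 3"
    using moment3_rotation [OF assms] by simp
  then show ?thesis
    by (simp add: moment3_diag_eq)
qed

lemma moment3_distinct_eq:
  assumes "a \<noteq> b" "b \<noteq> c" "a \<noteq> c"
  shows "moment3 a b c = 1 / (d * (d + 1) * (d + 2))"
proof -
  define K where "K = 1 / (d * (d + 1) * (d + 2))"
  have "moment3 a b e = moment3 a b c" if "e \<noteq> a" "e \<noteq> b" for e
    using moments_permute(3) [OF permutes_swap_id [of e UNIV c], of a b e] that assms
    by simp
  then have "(\<Sum>e\<in>UNIV. moment3 a b e)
      = moment3 a b a + moment3 a b b + (d - 2) * moment3 a b c"
    unfolding d_def using assms(1) by (intro sum_UNIV_two_points_plus_const)
  moreover have "(\<Sum>e\<in>UNIV. moment3 a b e) = (d + 2) * K"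
    using sum_moment3 [of a b] moment2_eq [of a b] assms(1) d_nonzero(3) by (simp add: K_def)
  moreover have "moment3 a b a = 2 * K" "moment3 a b b = 2 * K"
    using moment3_pair_eq [of a b] moment3_pair_eq [of b a] moment3_commute [of a b a]
      moment3_commute [of a b b] moment3_commute [of b a b] assms
    by (simp_all add: K_def)
  ultimately have "(d - 2) * moment3 a b c = (d - 2) * K"
    by algebra
  moreover have "d \<noteq> 2"
  proof -
    have "3 \<le> CARD('n)"
      using card_mono [of UNIV "{a, b, c}"] assms by simp
    then have "(of_nat CARD('n) :: complex) \<noteq> of_nat 2"
      by (simp only: of_nat_eq_iff)
    then show ?thesis
      by (simp add: d_def)
  qed
  ultimately have "moment3 a b c = K"
    by simp
  then show ?thesis
    by (simp add: K_def)
qed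

lemma moment3_eq: "moment3 a b c = perm_count3 a b c a b c / (d * (d + 1) * (d + 2))"
proof -
  consider "a = b" "b = c" | "a = b" "b \<noteq> c" | "a = c" "a \<noteq> b" | "b = c" "a \<noteq> b"
    | "a \<noteq> b" "b \<noteq> c" "a \<noteq> c"
    by blast
  then show ?thesis
  proof cases
    case 1
    then show ?thesis by (simp add: perm_count3_self moment3_diag_eq)
  next
    case 2
    then show ?thesis by (simp add: perm_count3_self moment3_pair_eq)
  next
    case 3
    then show ?thesis
      using moment3_pair_eq [of a b] moment3_commute(2) [of a a b] by (simp add: perm_count3_self)
  next
    case 4
    then show ?thesis
      using moment3_pair_eq [of b a] moment3_commute(1) [of a b b] moment3_commute(2) [of b b a]
      by (simp add: perm_count3_self)
  next
    case 5
    then show ?thesis by (simp add: perm_count3_self moment3_distinct_eq)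
  qed
qed

definition monomial3 :: "'n \<Rightarrow> 'n \<Rightarrow> 'n \<Rightarrow> 'n \<Rightarrow> 'n \<Rightarrow> 'n \<Rightarrow> complex^'n^'n \<Rightarrow> complex"
  where
  "monomial3 a b c a' b' c' U = U$a$i * U$b$i * U$c$i * cnj (U$a'$i * U$b'$i * U$c'$i)"

lemma continuous_on_monomial3 [continuous_intros]:
  "continuous_on S (monomial3 a b c a' b' c')"
  unfolding monomial3_def by (intro continuous_intros)

lemma monomial3_phase_mat:
  "monomial3 a b c a' b' c' (phase_mat t w ** U)
     = w ^ count (mset [a, b, c]) t * cnj w ^ count (mset [a', b', c']) t
       * monomial3 a b c a' b' c' U"
proof -
  have phases: "(if x = t then w else 1) * (if y = t then w else 1) * (if z = t then w else 1)
      = w ^ count (mset [x, y, z]) t" for x y z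
    by auto
  have "monomial3 a b c a' b' c' (phase_mat t w ** U)
      = ((if a = t then w else 1) * (if b = t then w else 1) * (if c = t then w else 1))
        * cnj ((if a' = t then w else 1) * (if b' = t then w else 1) * (if c' = t then w else 1))
        * monomial3 a b c a' b' c' U"
    unfolding monomial3_def phase_mat_mult complex_cnj_mult by (simp only: mult_ac)
  then show ?thesis
    by (simp only: phases complex_cnj_power)
qed

lemma integral_monomial3_eq_0:
  assumes "mset [a', b', c'] \<noteq> mset [a, b, c]"
  shows "integral\<^sup>L \<mu> (monomial3 a b c a' b' c') = 0"
proof -
  from assms obtain t where t: "count (mset [a, b, c]) t \<noteq> count (mset [a', b', c']) t"
    by (metis multiset_eqI)
  define z where "z = \<i> ^ count (mset [a, b, c]) t * (- \<i>) ^ count (mset [a', b', c']) t"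
  have "integral\<^sup>L \<mu> (monomial3 a b c a' b' c')
      = (\<integral>U. monomial3 a b c a' b' c' (phase_mat t \<i> ** U) \<partial>\<mu>)"
    by (rule integral_left_invariant [OF unitary_phase_mat, symmetric])
      (simp, intro continuous_intros)
  also have "\<dots> = (\<integral>U. z * monomial3 a b c a' b' c' U \<partial>\<mu>)"
    by (simp only: monomial3_phase_mat z_def complex_cnj_i)
  also have "\<dots> = z * integral\<^sup>L \<mu> (monomial3 a b c a' b' c')"
    by (rule integral_mult_right_zero)
  finally have "(1 - z) * integral\<^sup>L \<mu> (monomial3 a b c a' b' c') = 0"
    by (simp add: algebra_simps)
  moreover have "z \<noteq> 1"
    unfolding z_def using t by (intro i_power_neq_1) simp_all
  ultimately show ?thesis
    by simp
qed

lemma monomial3_rearrange: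
  assumes "mset [a', b', c'] = mset [a, b, c]"
  shows "monomial3 a b c a' b' c' U = weight a U * weight b U * weight c U"
  using mset3_eq_cases [OF assms] by (elim disjE) (simp_all add: monomial3_def weight_def mult_ac)

lemma integral_monomial3:
  "integral\<^sup>L \<mu> (monomial3 a b c a' b' c')
     = perm_count3 a b c a' b' c' / (d * (d + 1) * (d + 2))"
proof (cases "mset [a', b', c'] = mset [a, b, c]")
  case True
  have "integral\<^sup>L \<mu> (monomial3 a b c a' b' c') = moment3 a b c"
    unfolding moment3_def
    by (rule Bochner_Integration.integral_cong [OF refl]) (simp add: monomial3_rearrange [OF True])
  then show ?thesis
    by (simp add: moment3_eq perm_count3_rearrange [OF True])
next
  case False
  then show ?thesis
    by (simp add: integral_monomial3_eq_0 perm_count3_eq_0)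
qed

lemma diag_conj_product_expand:
  "(cadj U ** A ** U)$i$i * (cadj U ** B ** U)$i$i * (cadj U ** C ** U)$i$i
     = (\<Sum>a\<in>UNIV. \<Sum>b\<in>UNIV. \<Sum>c\<in>UNIV. \<Sum>e\<in>UNIV. \<Sum>h\<in>UNIV. \<Sum>g\<in>UNIV.
          A$a$b * B$c$e * C$h$g * monomial3 b e g a c h U)"
  unfolding diag_conj_expand monomial3_def
  by (simp only: mult.assoc, simp only: sum_distrib_right, simp only: sum_distrib_left,
      simp add: mult_ac)

lemma integral_diag_conj_product:
  "(\<integral>U. (cadj U ** A ** U)$i$i * (cadj U ** B ** U)$i$i * (cadj U ** C ** U)$i$i \<partial>\<mu>)
     = (trace A * trace B * trace C + trace A * trace (B ** C) + trace B * trace (A ** C)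
        + trace C * trace (A ** B) + trace (A ** B ** C) + trace (A ** C ** B))
       / (d * (d + 1) * (d + 2))"
proof -
  have "integrable \<mu> (monomial3 a b c a' b' c')" for a b c a' b' c'
    by (intro integrable_continuous continuous_intros)
  then have "(\<integral>U. (cadj U ** A ** U)$i$i * (cadj U ** B ** U)$i$i * (cadj U ** C ** U)$i$i \<partial>\<mu>)
      = (\<Sum>a\<in>UNIV. \<Sum>b\<in>UNIV. \<Sum>c\<in>UNIV. \<Sum>e\<in>UNIV. \<Sum>h\<in>UNIV. \<Sum>g\<in>UNIV.
          A$a$b * B$c$e * C$h$g * integral\<^sup>L \<mu> (monomial3 b e g a c h))"
    by (simp add: diag_conj_product_expand)
  also have "\<dots> = (\<Sum>a\<in>UNIV. \<Sum>b\<in>UNIV. \<Sum>c\<in>UNIV. \<Sum>e\<in>UNIV. \<Sum>h\<in>UNIV. \<Sum>g\<in>UNIV.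
          A$a$b * B$c$e * C$h$g * perm_count3 b e g a c h) / (d * (d + 1) * (d + 2))"
    by (simp add: integral_monomial3 sum_divide_distrib)
  finally show ?thesis
    by (simp only: sum_perm_count3)
qed

lemma integral_diag_conj_power3:
  "(\<integral>U. ((cadj U ** A ** U)$i$i) ^ 3 \<partial>\<mu>)
     = (trace A ^ 3 + 3 * trace A * trace (A ** A) + 2 * trace (A ** A ** A))
       / (d * (d + 1) * (d + 2))"
  using integral_diag_conj_product [of A A A] by (simp add: power3_eq_cube algebra_simps)

text \<open>
  For unitary \<open>U\<close> the factor \<open>(U\<^sup>* 1 U)\<^sub>i\<^sub>i\<close> equals 1, so the second moment is the case
  \<open>C = 1\<close> of the product formula.
\<close>

lemma integral_diag_conj_power2:
  "(\<integral>U. ((cadj U ** A ** U)$i$i)\<^sup>2 \<partial>\<mu>) = (trace A ^ 2 + trace (A ** A)) / (d * (d + 1))"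
proof -
  have trace_mat_1: "trace (mat 1 :: complex^'n^'n) = d"
    by (simp add: trace_def mat_def d_def)
  have "(\<integral>U. ((cadj U ** A ** U)$i$i)\<^sup>2 \<partial>\<mu>)
      = (\<integral>U. (cadj U ** A ** U)$i$i * (cadj U ** A ** U)$i$i * (cadj U ** mat 1 ** U)$i$i \<partial>\<mu>)"
  proof (rule integral_cong_AE)
    show "AE U in \<mu>. ((cadj U ** A ** U)$i$i)\<^sup>2
        = (cadj U ** A ** U)$i$i * (cadj U ** A ** U)$i$i * (cadj U ** mat 1 ** U)$i$i"
      using haar_unitary_AE_unitary [OF haar]
      by (rule eventually_mono) (simp add: unitary_mat_def power2_eq_square, simp add: mat_def)
  qed (intro borel_measurable_continuous continuous_intros)+
  also have "\<dots> = (d + 2) * (trace A ^ 2 + trace (A ** A)) / (d * (d + 1) * (d + 2))"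
    using integral_diag_conj_product [of A A "mat 1"]
    by (simp add: trace_mat_1 algebra_simps power2_eq_square)
  finally show ?thesis
    using d_nonzero(3) by simp
qed

end

section \<open>The twirl of the squared operator O_+\<close>

lemma O_plus_square:
  "(O_plus ** O_plus :: complex^('n::finite \<times> 'n \<times> 'n)^('n \<times> 'n \<times> 'n))
     = (\<chi> x y. if x = y then (1 + (- of_nat CARD('n)) ^ (wt x - 1))\<^sup>2 else 0)"
  by (simp add: vec_eq_iff O_plus_def matrix_matrix_mult_def power2_eq_square mult_delta_left
      mult_delta_right cong: if_cong)

lemma O_plus_square_eigenvalue:
  fixes d :: "'a::comm_ring_1"
  shows "(1 + (- d) ^ (wt (a, b, c) - 1))\<^sup>2 =
    4 + (d\<^sup>2 - 2 * d - 3)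
          * ((if a = b then 1 else 0) + (if b = c then 1 else 0) + (if a = c then 1 else 0))
      + (d ^ 4 - d\<^sup>2 + 6 * d + 6) * (if a = b \<and> b = c then 1 else 0)"
  by (cases "a = b"; cases "b = c"; cases "a = c")
    (simp_all add: wt_def algebra_simps power2_eq_square power4_eq_xxxx)

lemma sum_triple_products_coincidence_weights:
  fixes s :: "'n::finite \<Rightarrow> 'a::comm_ring_1"
  assumes "(\<Sum>a\<in>UNIV. s a) = 1"
  shows "(\<Sum>a\<in>UNIV. \<Sum>b\<in>UNIV. \<Sum>c\<in>UNIV.
      (4 + \<beta> * ((if a = b then 1 else 0) + (if b = c then 1 else 0) + (if a = c then 1 else 0))
         + \<gamma> * (if a = b \<and> b = c then 1 else 0)) * (s a * s b * s c))
    = 4 + 3 * \<beta> * (\<Sum>a\<in>UNIV. (s a)\<^sup>2) + \<gamma> * (\<Sum>a\<in>UNIV. (s a) ^ 3)"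
proof -
  have if_conj: "(if P \<and> Q then 1 else 0) = (if P then (if Q then 1 else 0) else (0::'a))" for P Q
    by simp
  have sum_if: "(\<Sum>x\<in>UNIV. if P then f x else 0) = (if P then (\<Sum>x\<in>UNIV. f x) else (0::'a))"
    for P and f :: "'n \<Rightarrow> 'a"
    by simp
  have "(\<Sum>a\<in>UNIV. \<Sum>b\<in>UNIV. \<Sum>c\<in>UNIV. s a * s b * s c) = 1"
    by (simp add: assms flip: sum_distrib_left sum_distrib_right)
  moreover have "(\<Sum>a\<in>UNIV. \<Sum>c\<in>UNIV. s a * s a * s c) = (\<Sum>a\<in>UNIV. (s a)\<^sup>2)"
    by (simp add: assms power2_eq_square flip: sum_distrib_left)
  moreover have "(\<Sum>a\<in>UNIV. \<Sum>b\<in>UNIV. s a * s b * s b) = (\<Sum>a\<in>UNIV. (s a)\<^sup>2)"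
    by (simp add: assms power2_eq_square mult.assoc flip: sum_distrib_left sum_distrib_right)
  moreover have "(\<Sum>a\<in>UNIV. \<Sum>b\<in>UNIV. s a * s b * s a) = (\<Sum>a\<in>UNIV. (s a)\<^sup>2)"
    by (simp add: assms power2_eq_square mult.commute mult.left_commute flip: sum_distrib_left)
  ultimately show ?thesis
    by (simp add: if_conj distrib_left distrib_right sum.distrib power3_eq_cube mult_delta_left
      mult_delta_right sum_if assms flip: sum_distrib_left)
qed

lemma trace_conj_O_plus_square:
  fixes U \<rho> :: "complex^'n::finite^'n" and d :: complex
  defines "d \<equiv> of_nat CARD('n)"
  assumes "unitary_mat U" and "trace \<rho> = 1"
  shows "trace (tensor3 U ** (O_plus ** O_plus) ** cadj (tensor3 U) ** tensor3 \<rho>)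
    = 4 + 3 * (d\<^sup>2 - 2 * d - 3) * (\<Sum>j\<in>UNIV. ((cadj U ** \<rho> ** U)$j$j)\<^sup>2)
        + (d ^ 4 - d\<^sup>2 + 6 * d + 6) * (\<Sum>j\<in>UNIV. ((cadj U ** \<rho> ** U)$j$j) ^ 3)"
proof -
  let ?\<sigma> = "cadj U ** \<rho> ** U"
  have "(\<Sum>j\<in>UNIV. ?\<sigma>$j$j) = 1"
    using trace_unitary_conj [OF assms(2)] assms(3) by (simp add: trace_def)
  moreover have "trace (tensor3 U ** (O_plus ** O_plus) ** cadj (tensor3 U) ** tensor3 \<rho>)
      = (\<Sum>a\<in>UNIV. \<Sum>b\<in>UNIV. \<Sum>c\<in>UNIV.
          (1 + (- d) ^ (wt (a, b, c) - 1))\<^sup>2 * (?\<sigma>$a$a * ?\<sigma>$b$b * ?\<sigma>$c$c))"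
    unfolding trace_conj_tensor3 O_plus_square trace_diag_mult sum_UNIV_triple
    by (simp add: tensor3_def d_def mult.assoc)
  ultimately show ?thesis
    unfolding O_plus_square_eigenvalue by (simp add: sum_triple_products_coincidence_weights)
qed

lemma O_plus_square_twirl_arith:
  fixes d t2 t3 :: complex
  assumes "d \<noteq> 0" "d + 1 \<noteq> 0" "d + 2 \<noteq> 0"
  shows "4 + 3 * (d\<^sup>2 - 2 * d - 3) * (d * ((1 + t2) / (d * (d + 1))))
      + (d ^ 4 - d\<^sup>2 + 6 * d + 6) * (d * ((1 + 3 * t2 + 2 * t3) / (d * (d + 1) * (d + 2))))
    = 1 / (d + 2) * ((d - 1) * (d\<^sup>2 + 3 * d + 4) + 3 * d * (d - 1) * (d + 1) * t2
        + 2 * (d ^ 3 - d\<^sup>2 + 6) * t3)"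
proof -
  have "d\<^sup>2 - 2 * d - 3 = (d - 3) * (d + 1)"
    "d ^ 4 - d\<^sup>2 + 6 * d + 6 = (d + 1) * (d ^ 3 - d\<^sup>2 + 6)"
    by algebra+
  then have "4 + 3 * (d\<^sup>2 - 2 * d - 3) * (d * ((1 + t2) / (d * (d + 1))))
      + (d ^ 4 - d\<^sup>2 + 6 * d + 6) * (d * ((1 + 3 * t2 + 2 * t3) / (d * (d + 1) * (d + 2))))
    = 4 + 3 * (d - 3) * (1 + t2) + (d ^ 3 - d\<^sup>2 + 6) * (1 + 3 * t2 + 2 * t3) / (d + 2)"
    using assms(1,2) by simp
  also have "\<dots> = 1 / (d + 2) * ((d - 1) * (d\<^sup>2 + 3 * d + 4) + 3 * d * (d - 1) * (d + 1) * t2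
        + 2 * (d ^ 3 - d\<^sup>2 + 6) * t3)"
    using assms(3) by (simp add: field_simps) algebra
  finally show ?thesis .
qed

lemma haar_integral_diag_conj_powers:
  fixes \<mu> :: "(complex^'n::finite^'n) measure" and \<rho> :: "complex^'n^'n" and d :: complex
  defines "d \<equiv> of_nat CARD('n)"
  assumes "haar_unitary \<mu>" and "trace \<rho> = 1"
  shows "(\<integral>U. ((cadj U ** \<rho> ** U)$j$j)\<^sup>2 \<partial>\<mu>) = (1 + trace (\<rho> ** \<rho>)) / (d * (d + 1))"
    and "(\<integral>U. ((cadj U ** \<rho> ** U)$j$j) ^ 3 \<partial>\<mu>)
      = (1 + 3 * trace (\<rho> ** \<rho>) + 2 * trace (\<rho> ** \<rho> ** \<rho>)) / (d * (d + 1) * (d + 2))"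
proof -
  interpret haar_column \<mu> j d
    unfolding d_def using assms(2) by unfold_locales simp_all
  show "(\<integral>U. ((cadj U ** \<rho> ** U)$j$j)\<^sup>2 \<partial>\<mu>) = (1 + trace (\<rho> ** \<rho>)) / (d * (d + 1))"
    using integral_diag_conj_power2 [of \<rho>] assms(3) by simp
  show "(\<integral>U. ((cadj U ** \<rho> ** U)$j$j) ^ 3 \<partial>\<mu>)
      = (1 + 3 * trace (\<rho> ** \<rho>) + 2 * trace (\<rho> ** \<rho> ** \<rho>)) / (d * (d + 1) * (d + 2))"
    using integral_diag_conj_power3 [of \<rho>] assms(3) by simp
qed

lemma trace_Phi3_O_plus_square_haar:
  fixes \<mu> :: "(complex^'n::finite^'n) measure" and \<rho> :: "complex^'n^'n"
  assumes haar: "haar_unitary \<mu>" and trace: "trace \<rho> = 1"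
  shows "trace (Phi3 \<mu> (O_plus ** O_plus) ** tensor3 \<rho>) =
    (let d = (of_nat CARD('n) :: complex) in
     1 / (d + 2) * ((d - 1) * (d^2 + 3 * d + 4)
        + 3 * d * (d - 1) * (d + 1) * trace (\<rho> ** \<rho>)
        + 2 * (d^3 - d^2 + 6) * trace (\<rho> ** \<rho> ** \<rho>)))"
proof -
  define d where "d = (of_nat CARD('n) :: complex)"
  define \<sigma> where "\<sigma> j U = (cadj U ** \<rho> ** U)$j$j" for j and U :: "complex^'n^'n"
  have prob: "prob_space \<mu>"
    using haar by (simp add: haar_unitary_def)
  have continuous: "continuous_on UNIV (\<sigma> j)" for j
    unfolding \<sigma>_def by (intro continuous_intros)
  have integrable: "integrable \<mu> (\<lambda>U. \<sigma> j U ^ k)" for j k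
    by (intro integrable_haar_continuous haar continuous_intros continuous)
  have moments: "(\<integral>U. (\<sigma> j U)\<^sup>2 \<partial>\<mu>) = (1 + trace (\<rho> ** \<rho>)) / (d * (d + 1))"
    "(\<integral>U. \<sigma> j U ^ 3 \<partial>\<mu>)
      = (1 + 3 * trace (\<rho> ** \<rho>) + 2 * trace (\<rho> ** \<rho> ** \<rho>)) / (d * (d + 1) * (d + 2))"
    for j
    using haar_integral_diag_conj_powers [OF haar trace] by (simp_all add: \<sigma>_def d_def)
  have "trace (Phi3 \<mu> (O_plus ** O_plus) ** tensor3 \<rho>)
      = (\<integral>U. trace (tensor3 U ** (O_plus ** O_plus) ** cadj (tensor3 U) ** tensor3 \<rho>) \<partial>\<mu>)"
    unfolding Phi3_def by (intro trace_integral_mult integrable_haar_continuous haar continuous_intros)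
  also have "\<dots> = (\<integral>U. 4 + 3 * (d\<^sup>2 - 2 * d - 3) * (\<Sum>j\<in>UNIV. (\<sigma> j U)\<^sup>2)
      + (d ^ 4 - d\<^sup>2 + 6 * d + 6) * (\<Sum>j\<in>UNIV. \<sigma> j U ^ 3) \<partial>\<mu>)"
  proof (rule integral_cong_AE)
    show "AE U in \<mu>. trace (tensor3 U ** (O_plus ** O_plus) ** cadj (tensor3 U) ** tensor3 \<rho>)
        = 4 + 3 * (d\<^sup>2 - 2 * d - 3) * (\<Sum>j\<in>UNIV. (\<sigma> j U)\<^sup>2)
          + (d ^ 4 - d\<^sup>2 + 6 * d + 6) * (\<Sum>j\<in>UNIV. \<sigma> j U ^ 3)"
      using haar_unitary_AE_unitary [OF haar]
      by (rule eventually_mono) (simp add: trace_conj_O_plus_square trace d_def \<sigma>_def)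
  qed (intro borel_measurable_haar_continuous haar continuous continuous_intros)+
  also have "\<dots> = 4 + 3 * (d\<^sup>2 - 2 * d - 3) * (d * ((1 + trace (\<rho> ** \<rho>)) / (d * (d + 1))))
      + (d ^ 4 - d\<^sup>2 + 6 * d + 6) * (d * ((1 + 3 * trace (\<rho> ** \<rho>)
          + 2 * trace (\<rho> ** \<rho> ** \<rho>)) / (d * (d + 1) * (d + 2))))"
    using prob
    by (simp add: integrable moments finite_measure.integrable_const [OF prob_space.finite_measure]
        prob_space.prob_space flip: d_def)
  also have "\<dots> = 1 / (d + 2) * ((d - 1) * (d\<^sup>2 + 3 * d + 4)
      + 3 * d * (d - 1) * (d + 1) * trace (\<rho> ** \<rho>) + 2 * (d ^ 3 - d\<^sup>2 + 6) * trace (\<rho> ** \<rho> ** \<rho>))"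
    unfolding d_def by (rule O_plus_square_twirl_arith [OF of_nat_card_nonzero])
  finally show ?thesis
    by (simp only: Let_def d_def)
qed

theorem proposition17:
  fixes \<mu> :: "(complex^'n^'n) measure" and \<rho> :: "complex^'n^'n"
  assumes "CARD('n) \<ge> 2"
    and "haar_unitary \<mu> \<or> unitary_3design \<mu>"
    and "density_op \<rho>"
  shows "trace (Phi3 \<mu> (O_plus ** O_plus) ** tensor3 \<rho>) =
    (let d = (of_nat CARD('n) :: complex) in
     1 / (d + 2) * ((d - 1) * (d^2 + 3 * d + 4)
        + 3 * d * (d - 1) * (d + 1) * trace (\<rho> ** \<rho>)
        + 2 * (d^3 - d^2 + 6) * trace (\<rho> ** \<rho> ** \<rho>)))"
proof -
  \<comment> \<open>The formula holds for \<open>d = 1\<close> as well.\<close>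
  obtain \<nu> where "haar_unitary \<nu>" and "Phi3 \<mu> (O_plus ** O_plus) = Phi3 \<nu> (O_plus ** O_plus)"
    using assms(2) unfolding unitary_3design_def by blast
  moreover have "trace \<rho> = 1"
    using assms(3) by (simp add: density_op_def)
  ultimately show ?thesis
    by (simp only: trace_Phi3_O_plus_square_haar)
qed

end
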